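(* For every integer $n$ with $1\le n\le 10$, \[ s(P_n)=\max_{0\le r\le n}|Q^{(r)}(P_n)|. \]
   Context: $Q(P_n)$ is the family of subsets of $[n]=\{1,\dots,n\}$ containing no two consecutive integers, and $Q^{(r)}(P_n)$ its members of size $r$. $s(P_n)$ is the maximum size of an antichain (a subfamily in which no member is a proper subset of another) in $Q(P_n)$. *)

theory Defs
  imports Main
begin

definition Q :: "nat \<Rightarrow> nat set set" where
  "Q n = {S. S \<subseteq> {1..n} \<and> (\<forall>i. i \<in> S \<longrightarrow> Suc i \<notin> S)}"

definition Qr :: "nat \<Rightarrow> nat \<Rightarrow> nat set set" where
  "Qr n r = {S \<in> Q n. card S = r}"

definition is_antichain :: "'a set set \<Rightarrow> bool" where
  "is_antichain F \<longleftrightarrow> (\<forall>A\<in>F. \<forall>B\<in>F. \<not> A \<subset> B)"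

definition s :: "nat \<Rightarrow> nat" where
  "s n = Max {card F | F. F \<subseteq> Q n \<and> is_antichain F}"

end

theory Submission
  imports Defs
begin

text \<open>An antichain meets every chain in at most one set, so no antichain in \<open>Q n\<close> is larger
  than a cover of \<open>Q n\<close> by chains, while every level \<open>Qr n r\<close> is itself an antichain.
  For \<open>n \<le> 10\<close> there are explicit chain covers with only as many chains as the widest
  level has members, so both bounds meet. The covers are checked by evaluation on an
  explicit enumeration of \<open>Q n\<close> by strictly increasing lists.\<close>

lemma card_antichain_le_card_chain_cover:
  assumes "finite C" and "\<forall>c\<in>C. chain\<^sub>\<subseteq> c" and "F \<subseteq> \<Union>C" and "is_antichain F"
  shows "card F \<le> card C"
proof -
  have "\<forall>A\<in>F. \<exists>c\<in>C. A \<in> c"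
    using \<open>F \<subseteq> \<Union>C\<close> by blast
  then obtain f where f: "\<forall>A\<in>F. f A \<in> C \<and> A \<in> f A"
    by metis
  have "inj_on f F"
  proof
    fix A B assume "A \<in> F" "B \<in> F" "f A = f B"
    then have "A \<subseteq> B \<or> B \<subseteq> A"
      using f assms(2) unfolding chain_subset_def by metis
    then show "A = B"
      using \<open>A \<in> F\<close> \<open>B \<in> F\<close> \<open>is_antichain F\<close> unfolding is_antichain_def by blast
  qed
  then show ?thesis
    using f \<open>finite C\<close> by (intro card_inj_on_le) auto
qed

lemma chain_subset_set_sorted_wrt:
  assumes "sorted_wrt (\<lambda>a b. set a \<subseteq> set b) c"
  shows "chain\<^sub>\<subseteq> (set ` set c)"
  unfolding chain_subset_def
proof (intro ballI)
  fix A B assume "A \<in> set ` set c" "B \<in> set ` set c"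
  then obtain i j where "i < length c" "A = set (c ! i)" "j < length c" "B = set (c ! j)"
    by (metis imageE in_set_conv_nth)
  moreover have "set (c ! i) \<subseteq> set (c ! j)" if "i < j" "j < length c" for i j
    using sorted_wrt_nth_less[OF assms that] .
  ultimately show "A \<subseteq> B \<or> B \<subseteq> A"
    by (metis linorder_neqE_nat order_refl)
qed

lemma finite_Q: "finite (Q n)"
  by (rule finite_subset[of _ "Pow {1..n}"]) (auto simp: Q_def)

lemma finite_Q_member: "S \<in> Q n \<Longrightarrow> finite S"
  unfolding Q_def by (blast intro: finite_subset[of _ "{1..n}"])

lemma is_antichain_if_card_eq:
  assumes "\<forall>A\<in>F. finite A \<and> card A = r"
  shows "is_antichain F"
  unfolding is_antichain_def
proof (intro ballI notI)
  fix A B assume "A \<in> F" "B \<in> F" "A \<subset> B"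
  have "finite B" and "card A = card B"
    using \<open>A \<in> F\<close> \<open>B \<in> F\<close> assms by simp_all
  moreover have "card A < card B"
    using \<open>finite B\<close> \<open>A \<subset> B\<close> by (rule psubset_card_mono)
  ultimately show False
    by simp
qed

lemma is_antichain_Qr: "is_antichain (Qr n r)"
proof -
  have "\<forall>A\<in>Qr n r. finite A \<and> card A = r"
    unfolding Qr_def using finite_Q_member by blast
  then show ?thesis
    by (rule is_antichain_if_card_eq)
qed

lemma Qr_subset_Q: "Qr n r \<subseteq> Q n"
  unfolding Qr_def by auto

lemma finite_card_antichains_Q: "finite {card F | F. F \<subseteq> Q n \<and> is_antichain F}"
proof (rule finite_subset)
  show "{card F | F. F \<subseteq> Q n \<and> is_antichain F} \<subseteq> {..card (Q n)}"
    using card_mono[OF finite_Q] by auto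
qed simp

lemma card_antichain_le_s:
  assumes "F \<subseteq> Q n" and "is_antichain F"
  shows "card F \<le> s n"
proof -
  have "card F \<in> {card F | F. F \<subseteq> Q n \<and> is_antichain F}"
    using assms by blast
  then show ?thesis
    unfolding s_def by (rule Max_ge[OF finite_card_antichains_Q])
qed

lemma s_attained: "\<exists>F. F \<subseteq> Q n \<and> is_antichain F \<and> card F = s n"
proof -
  have "card ({} :: nat set set) \<in> {card F | F. F \<subseteq> Q n \<and> is_antichain F}"
    by (intro CollectI exI[of _ "{}"]) (simp add: is_antichain_def)
  then have "s n \<in> {card F | F. F \<subseteq> Q n \<and> is_antichain F}"
    unfolding s_def by (intro Max_in[OF finite_card_antichains_Q]) blast
  then show ?thesis
    by auto
qed

lemma s_eq_Max_card_Qr_if_level_attains: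
  assumes "r \<le> n" and "s n \<le> card (Qr n r)"
  shows "s n = Max {card (Qr n r) | r. r \<le> n}"
proof (rule antisym)
  show "s n \<le> Max {card (Qr n r) | r. r \<le> n}"
    using assms by (intro le_trans[OF _ Max_ge]) auto
  show "Max {card (Qr n r) | r. r \<le> n} \<le> s n"
    by (intro Max.boundedI) (auto intro!: card_antichain_le_s Qr_subset_Q is_antichain_Qr)
qed

lemma Q_0: "Q 0 = {{}}"
  unfolding Q_def by auto

lemma Q_Suc_0: "Q (Suc 0) = {{}, {1}}"
  unfolding Q_def by (auto simp: subset_iff)

lemma Q_Suc_Suc: "Q (Suc (Suc n)) = Q (Suc n) \<union> insert (Suc (Suc n)) ` Q n"
proof
  show "Q (Suc (Suc n)) \<subseteq> Q (Suc n) \<union> insert (Suc (Suc n)) ` Q n"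
  proof
    fix S assume S: "S \<in> Q (Suc (Suc n))"
    show "S \<in> Q (Suc n) \<union> insert (Suc (Suc n)) ` Q n"
    proof (cases "Suc (Suc n) \<in> S")
      case False
      then have "S \<in> Q (Suc n)"
        using S unfolding Q_def by (auto simp: subset_iff) (metis le_Suc_eq)
      then show ?thesis by simp
    next
      case True
      then have "Suc n \<notin> S"
        using S unfolding Q_def by auto
      then have "S - {Suc (Suc n)} \<in> Q n"
        using S unfolding Q_def by (auto simp: subset_iff) (metis le_Suc_eq)
      moreover have "S = insert (Suc (Suc n)) (S - {Suc (Suc n)})"
        using True by auto
      ultimately show ?thesis by blast
    qed
  qed
next
  show "Q (Suc n) \<union> insert (Suc (Suc n)) ` Q n \<subseteq> Q (Suc (Suc n))"
    unfolding Q_def by (auto simp: subset_iff)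
qed

fun Q_list :: "nat \<Rightarrow> nat list list" where
  "Q_list 0 = [[]]"
| "Q_list (Suc 0) = [[], [1]]"
| "Q_list (Suc (Suc n)) = Q_list (Suc n) @ map (\<lambda>l. l @ [Suc (Suc n)]) (Q_list n)"

lemma set_Q_list: "set ` set (Q_list n) = Q n"
proof (induction n rule: Q_list.induct)
  case (3 n)
  have "set ` set (Q_list (Suc (Suc n)))
      = set ` set (Q_list (Suc n)) \<union> insert (Suc (Suc n)) ` set ` set (Q_list n)"
    by (auto simp: image_Un image_image)
  then show ?case
    using 3 by (simp add: Q_Suc_Suc)
qed (auto simp: Q_0 Q_Suc_0)

lemma set_subset_if_mem_Q_list: "l \<in> set (Q_list n) \<Longrightarrow> set l \<subseteq> {1..n}"
  using set_Q_list[of n] unfolding Q_def by blast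

lemma sorted_wrt_less_Q_list: "l \<in> set (Q_list n) \<Longrightarrow> sorted_wrt (<) l"
proof (induction n arbitrary: l rule: Q_list.induct)
  case (3 n)
  then consider "l \<in> set (Q_list (Suc n))"
    | m where "m \<in> set (Q_list n)" "l = m @ [Suc (Suc n)]"
    by auto
  then show ?case
  proof cases
    case (2 m)
    then have "\<forall>x\<in>set m. x < Suc (Suc n)"
      using set_subset_if_mem_Q_list by fastforce
    then show ?thesis
      using 2 "3.IH"(2) by (simp add: sorted_wrt_append)
  qed (use "3.IH"(1) in blast)
qed auto

lemma distinct_Q_list: "distinct (Q_list n)"
proof (induction n rule: Q_list.induct)
  case (3 n)
  have "l @ [Suc (Suc n)] \<notin> set (Q_list (Suc n))" for l
    using set_subset_if_mem_Q_list[of "l @ [Suc (Suc n)]" "Suc n"] by auto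
  then show ?case
    using 3 by (auto simp: distinct_map inj_on_def)
qed auto

lemma card_Qr_eq_length_filter:
  "card (Qr n r) = length (filter (\<lambda>l. length l = r) (Q_list n))"
proof -
  let ?L = "filter (\<lambda>l. length l = r) (Q_list n)"
  have "card (set l) = length l" if "l \<in> set (Q_list n)" for l
    using sorted_wrt_less_Q_list[OF that] by (simp add: strict_sorted_iff distinct_card)
  then have "Qr n r = set ` set ?L"
    unfolding Qr_def set_Q_list[symmetric] by force
  moreover have "inj_on set (set ?L)"
    using sorted_wrt_less_Q_list
    by (intro inj_onI) (metis filter_is_subset subsetD sorted_distinct_set_unique strict_sorted_iff)
  ultimately show ?thesis
    by (simp only: card_image distinct_card[OF distinct_filter[OF distinct_Q_list]])
qed

definition is_chain_cover_certificate :: "nat \<Rightarrow> nat list list list \<Rightarrow> bool" where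
  "is_chain_cover_certificate n cs \<longleftrightarrow>
     (\<forall>c\<in>set cs. sorted_wrt (\<lambda>a b. set a \<subseteq> set b) c) \<and>
     (\<forall>l\<in>set (Q_list n). l \<in> set (concat cs)) \<and>
     (\<exists>r\<in>set [0..<Suc n]. length cs \<le> length (filter (\<lambda>l. length l = r) (Q_list n)))"

lemma s_eq_Max_card_Qr_if_certificate:
  assumes "is_chain_cover_certificate n cs"
  shows "s n = Max {card (Qr n r) | r. r \<le> n}"
proof -
  let ?C = "(\<lambda>c. set ` set c) ` set cs"
  obtain r where "r \<in> set [0..<Suc n]" and level: "length cs \<le> card (Qr n r)"
    using assms unfolding is_chain_cover_certificate_def card_Qr_eq_length_filter by blast
  obtain F where F: "F \<subseteq> Q n" "is_antichain F" "card F = s n"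
    using s_attained by blast
  have "\<forall>l\<in>set (Q_list n). \<exists>c\<in>set cs. l \<in> set c"
    using assms unfolding is_chain_cover_certificate_def by simp
  then have "Q n \<subseteq> \<Union>?C"
    unfolding set_Q_list[symmetric] by fastforce
  then have "F \<subseteq> \<Union>?C"
    using F(1) by (rule subset_trans[rotated])
  moreover have "\<forall>c\<in>?C. chain\<^sub>\<subseteq> c"
    using assms chain_subset_set_sorted_wrt unfolding is_chain_cover_certificate_def by auto
  ultimately have "s n \<le> card ?C"
    using F card_antichain_le_card_chain_cover[of ?C F] by simp
  also have "\<dots> \<le> length cs"
    using card_image_le card_length le_trans by blast
  finally have "s n \<le> card (Qr n r)"
    using level by simp
  moreover have "r \<le> n"
    using \<open>r \<in> set [0..<Suc n]\<close> by auto
  ultimately show ?thesis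
    using s_eq_Max_card_Qr_if_level_attains by blast
qed

text \<open>Entry \<open>i\<close> is a chain cover of \<open>Q (Suc i)\<close>.\<close>

definition chain_covers :: "nat list list list list" where
  "chain_covers =
  [[[[],[1]]],

   [[[],[1]],
    [[2]]],

   [[[],[1],[1,3]],
    [[2]],
    [[3]]],

   [[[],[1],[1,4]],
    [[2],[2,4]],
    [[3],[1,3]],
    [[4]]],

   [[[],[1],[1,3],[1,3,5]],
    [[2],[2,4]],
    [[3],[3,5]],
    [[4],[1,4]],
    [[5],[1,5]],
    [[2,5]]],

   [[[],[1],[1,3],[1,3,6]],
    [[2],[2,4],[2,4,6]],
    [[3],[3,5]],
    [[4],[1,4],[1,4,6]],
    [[5],[1,5],[1,3,5]],
    [[2,5]],
    [[6],[1,6]],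
    [[2,6]],
    [[3,6]],
    [[4,6]]],

   [[[],[1],[1,3],[1,3,5],[1,3,5,7]],
    [[2],[2,4],[2,4,7]],
    [[3],[3,5],[3,5,7]],
    [[4],[1,4],[1,4,7]],
    [[5],[1,5],[1,5,7]],
    [[2,5],[2,5,7]],
    [[6],[1,6],[1,4,6]],
    [[2,6],[2,4,6]],
    [[3,6],[1,3,6]],
    [[4,6]],
    [[7],[1,7],[1,3,7]],
    [[2,7]],
    [[3,7]],
    [[4,7]],
    [[5,7]]],

   [[[],[1],[1,3],[1,3,6],[1,3,6,8]],
    [[2],[2,4],[2,4,6],[2,4,6,8]],
    [[3],[3,5],[1,3,5],[1,3,5,8]],
    [[4],[1,4],[1,4,6],[1,4,6,8]],
    [[5],[1,5],[1,5,7]],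
    [[2,5],[2,5,8]],
    [[6],[1,6],[1,6,8]],
    [[2,6],[2,6,8]],
    [[3,6],[3,6,8]],
    [[4,6],[4,6,8]],
    [[7],[1,7],[1,3,7],[1,3,5,7]],
    [[2,7],[2,4,7]],
    [[3,7],[3,5,7]],
    [[4,7],[1,4,7]],
    [[5,7],[2,5,7]],
    [[8],[1,8],[1,3,8]],
    [[2,8],[2,4,8]],
    [[3,8],[3,5,8]],
    [[4,8],[1,4,8]],
    [[5,8],[1,5,8]],
    [[6,8]]],

   [[[],[1],[1,3],[1,3,6],[1,3,6,9]],
    [[2],[2,4],[2,4,6],[2,4,6,9]],
    [[3],[3,5],[3,5,8]],
    [[4],[1,4],[1,4,7],[1,4,7,9]],
    [[5],[1,5],[1,3,5],[1,3,5,7],[1,3,5,7,9]],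
    [[2,5],[2,5,7],[2,5,7,9]],
    [[6],[1,6],[1,4,6],[1,4,6,9]],
    [[2,6],[2,6,8]],
    [[3,6],[3,6,8]],
    [[4,6],[4,6,8]],
    [[7],[1,7],[1,3,7],[1,3,7,9]],
    [[2,7],[2,4,7],[2,4,7,9]],
    [[3,7],[3,5,7],[3,5,7,9]],
    [[4,7],[4,7,9]],
    [[5,7],[1,5,7],[1,5,7,9]],
    [[8],[1,8],[1,4,8],[1,4,6,8]],
    [[2,8],[2,5,8]],
    [[3,8],[1,3,8],[1,3,6,8]],
    [[4,8],[2,4,8],[2,4,6,8]],
    [[5,8],[1,5,8],[1,3,5,8]],
    [[6,8],[1,6,8]],
    [[9],[1,9],[1,3,9],[1,3,5,9]],
    [[2,9],[2,4,9]],
    [[3,9],[3,5,9]],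
    [[4,9],[1,4,9]],
    [[5,9],[1,5,9]],
    [[2,5,9]],
    [[6,9],[1,6,9]],
    [[2,6,9]],
    [[3,6,9]],
    [[4,6,9]],
    [[7,9],[1,7,9]],
    [[2,7,9]],
    [[3,7,9]],
    [[5,7,9]]],

   [[[],[1],[1,3],[1,3,6],[1,3,6,10]],
    [[2],[2,4],[2,4,6],[2,4,6,8],[2,4,6,8,10]],
    [[3],[3,5],[3,5,8],[3,5,8,10]],
    [[4],[1,4],[1,4,7],[1,4,7,10]],
    [[5],[1,5],[1,3,5],[1,3,5,8],[1,3,5,8,10]],
    [[2,5],[2,5,7],[2,5,7,10]],
    [[6],[1,6],[1,4,6],[1,4,6,8],[1,4,6,8,10]],
    [[2,6],[2,6,8],[2,6,8,10]],
    [[3,6],[3,6,8],[3,6,8,10]],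
    [[4,6],[4,6,8],[4,6,8,10]],
    [[7],[1,7],[1,3,7],[1,3,7,10]],
    [[2,7],[2,4,7],[2,4,7,10]],
    [[3,7],[3,5,7],[3,5,7,10]],
    [[4,7],[4,7,9]],
    [[5,7],[1,5,7],[1,3,5,7],[1,3,5,7,10]],
    [[8],[1,8],[1,4,8],[1,4,8,10]],
    [[2,8],[2,5,8],[2,5,8,10]],
    [[3,8],[1,3,8],[1,3,6,8],[1,3,6,8,10]],
    [[4,8],[2,4,8],[2,4,8,10]],
    [[5,8],[1,5,8],[1,5,8,10]],
    [[6,8],[1,6,8],[1,6,8,10]],
    [[9],[1,9],[1,3,9],[1,3,5,9],[1,3,5,7,9]],
    [[2,9],[2,4,9],[2,4,7,9]],
    [[3,9],[3,5,9],[3,5,7,9]],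
    [[4,9],[1,4,9],[1,4,7,9]],
    [[5,9],[1,5,9],[1,5,7,9]],
    [[2,5,9],[2,5,7,9]],
    [[6,9],[1,6,9],[1,4,6,9]],
    [[2,6,9],[2,4,6,9]],
    [[3,6,9],[1,3,6,9]],
    [[4,6,9]],
    [[7,9],[1,7,9],[1,3,7,9]],
    [[2,7,9]],
    [[3,7,9]],
    [[5,7,9]],
    [[10],[1,10],[1,3,10],[1,3,8,10]],
    [[2,10],[2,4,10],[2,4,6,10]],
    [[3,10],[3,5,10],[1,3,5,10]],
    [[4,10],[1,4,10],[1,4,6,10]],
    [[5,10],[1,5,10],[1,5,7,10]],
    [[2,5,10]],
    [[6,10],[1,6,10]],
    [[2,6,10]],
    [[3,6,10]],
    [[4,6,10]],
    [[7,10],[1,7,10]],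
    [[2,7,10]],
    [[3,7,10]],
    [[4,7,10]],
    [[5,7,10]],
    [[8,10],[1,8,10]],
    [[2,8,10]],
    [[3,8,10]],
    [[4,8,10]],
    [[5,8,10]],
    [[6,8,10]]]]"

theorem mainTheorem12:
  fixes n :: nat
  assumes "1 \<le> n" and "n \<le> 10"
  shows "s n = Max {card (Qr n r) | r. r \<le> n}"
proof -
  have "list_all (\<lambda>i. is_chain_cover_certificate (Suc i) (chain_covers ! i)) [0..<10]"
    by code_simp
  then have "\<forall>i<10. is_chain_cover_certificate (Suc i) (chain_covers ! i)"
    by (simp add: list_all_iff)
  moreover have "n - 1 < 10" and "Suc (n - 1) = n"
    using assms by simp_all
  ultimately have "is_chain_cover_certificate n (chain_covers ! (n - 1))"
    by metis
  then show ?thesis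
    by (rule s_eq_Max_card_Qr_if_certificate)
qed

end
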